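(* For every $\epsilon\in\mathbb{R}$, the set $\mathrm{Spec}(\mathcal{L}_\epsilon)$ is a discrete subset of $\mathbb{C}$.
   Context: Fix $a>0$, $b\in\mathbb{R}\setminus\{0\}$, $\nu\in[0,1)$, an integer $k\ge 2$ and $c\in C^k(\mathbb{S}^1,\mathbb{C})$ (functions on $\mathbb{S}^1$ are $2\pi$-periodic functions of $t\in\mathbb{R}$). For $\epsilon\in\mathbb{R}$ put $\lambda_\epsilon=a+ib\epsilon$, $L_\epsilon=\lambda_\epsilon\partial_t-ir\partial_r$ on $(0,\infty)\times\mathbb{S}^1$ (coordinates $(r,t)$), and $\mathcal{L}_\epsilon u=L_\epsilon u+i\lambda_\epsilon\nu u-c(t)\bar u$. A basic solution of $\mathcal{L}_\epsilon$ is a nontrivial solution $w$ of $\mathcal{L}_\epsilon w=0$ on $(0,\infty)\times\mathbb{S}^1$ of the form $w=r^\sigma\phi(t)+\overline{r^\sigma\psi(t)}$ with $\sigma\in\mathbb{C}$ and $\phi,\psi$ $2\pi$-periodic. (If $\sigma\notin\mathbb{R}$ one of $|\phi|,|\psi|$ is everywhere strictly larger than the other; replacing $(\sigma,\phi,\psi)$ by $(\bar\sigma,\bar\psi,\bar\phi)$ if necessary one writes $w$ with $|\phi|>|\psi|$; if $\sigma\in\mathbb{R}$, $w=r^\sigma f$ with $f=\phi+\bar\psi$.) The number $\sigma$ in this normalized representation is the exponent of $w$, and $\mathrm{Spec}(\mathcal{L}_\epsilon)\subset\mathbb{C}$ is the set of exponents of basic solutions of $\mathcal{L}_\epsilon$.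 *)

theory Defs
  imports "HOL-Analysis.Analysis"
begin

text \<open>A function on the circle S^1 is a 2pi-periodic function of t.\<close>
definition periodic2pi :: "(real \<Rightarrow> 'a) \<Rightarrow> bool" where
  "periodic2pi f \<longleftrightarrow> (\<forall>t. f (t + 2 * pi) = f t)"

definition vderiv_iter :: "nat \<Rightarrow> (real \<Rightarrow> complex) \<Rightarrow> real \<Rightarrow> complex" where
  "vderiv_iter j f = ((\<lambda>g x. vector_derivative g (at x)) ^^ j) f"

definition Ck :: "nat \<Rightarrow> (real \<Rightarrow> complex) \<Rightarrow> bool" where
  "Ck k f \<longleftrightarrow> (\<forall>j<k. \<forall>x. vderiv_iter j f differentiable at x)
              \<and> continuous_on UNIV (vderiv_iter k f)"

definition lam :: "real \<Rightarrow> real \<Rightarrow> real \<Rightarrow> complex" where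
  "lam a b \<epsilon> = Complex a (b * \<epsilon>)"

definition solves :: "real \<Rightarrow> real \<Rightarrow> real \<Rightarrow> (real \<Rightarrow> complex) \<Rightarrow> real
                       \<Rightarrow> (real \<Rightarrow> real \<Rightarrow> complex) \<Rightarrow> bool" where
  "solves a b \<nu> c \<epsilon> w \<longleftrightarrow>
     (\<forall>r>0. \<forall>t. \<exists>wt wr.
        ((\<lambda>s. w r s) has_vector_derivative wt) (at t) \<and>
        ((\<lambda>\<rho>. w \<rho> t) has_vector_derivative wr) (at r) \<and>
        lam a b \<epsilon> * wt - \<i> * complex_of_real r * wr + \<i> * lam a b \<epsilon> * complex_of_real \<nu> * w r t
          - c t * cnj (w r t) = 0)"

definition basic_form :: "complex \<Rightarrow> (real \<Rightarrow> complex) \<Rightarrow> (real \<Rightarrow> complex)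
                          \<Rightarrow> real \<Rightarrow> real \<Rightarrow> complex" where
  "basic_form \<sigma> \<phi> \<psi> r t =
     complex_of_real r powr \<sigma> * \<phi> t + cnj (complex_of_real r powr \<sigma> * \<psi> t)"

text \<open>Spec: exponents sigma of basic solutions written in normalized form
  (sigma real, or |phi| > |psi| everywhere).\<close>
definition Spec :: "real \<Rightarrow> real \<Rightarrow> real \<Rightarrow> (real \<Rightarrow> complex) \<Rightarrow> real \<Rightarrow> complex set" where
  "Spec a b \<nu> c \<epsilon> = {\<sigma>. \<exists>\<phi> \<psi>.
      periodic2pi \<phi> \<and> periodic2pi \<psi> \<and>
      solves a b \<nu> c \<epsilon> (basic_form \<sigma> \<phi> \<psi>) \<and>
      (\<exists>r>0. \<exists>t. basic_form \<sigma> \<phi> \<psi> r t \<noteq> 0) \<and>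
      (\<sigma> \<in> \<real> \<or> (\<forall>t. norm (\<phi> t) > norm (\<psi> t)))}"

end

theory Submission
  imports Defs "HOL-Complex_Analysis.Conformal_Mappings"
begin

text \<open>A basic solution with exponent \<sigma> yields a nontrivial 2\<pi>-periodic solution of a linear
  2\<times>2 system Z' = A(\<sigma>, t) Z whose coefficients depend affinely on \<sigma>: for real \<sigma> the
  pair (\<phi> + cnj \<psi>, cnj (\<phi> + cnj \<psi>)), for non-real \<sigma> the pair (\<phi>, \<psi>) itself. Hence \<sigma>
  is a zero of det (\<Phi>(\<sigma>, 2\<pi>) - I), \<Phi> the fundamental matrix, and building \<Phi> as a
  Picard series whose terms are polynomials in \<sigma> shows that this determinant is entire.
  It is not identically zero: at \<sigma> = -\<i> |\<lambda>|^2 the quantity |Z1|^2 - |Z2|^2 strictly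
  increases along every nonzero solution because Re \<lambda> = a > 0, so no periodic solution
  exists there. The zeros of an entire function that is not identically zero have no limit
  point.\<close>

lemma periodic2pi_add_int:
  assumes "periodic2pi f"
  shows "f (t + 2 * pi * of_int m) = f t"
proof (induction m rule: int_induct[where k = 0])
  case (step1 i)
  have "f (t + 2 * pi * of_int (i + 1)) = f ((t + 2 * pi * of_int i) + 2 * pi)"
    by (simp add: algebra_simps)
  with step1 assms show ?case unfolding periodic2pi_def by simp
next
  case (step2 i)
  have "f (t + 2 * pi * of_int i) = f ((t + 2 * pi * of_int (i - 1)) + 2 * pi)"
    by (simp add: algebra_simps)
  with step2 assms show ?case unfolding periodic2pi_def by simp
qed simp

lemma Ck_imp_continuous:
  assumes "0 < k" "Ck k f"
  shows "continuous_on UNIV f"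
proof -
  have "f differentiable at x" for x
    using assms unfolding Ck_def vderiv_iter_def by (metis funpow_0)
  then show ?thesis
    by (intro continuous_at_imp_continuous_on) (auto intro: differentiable_imp_continuous_within)
qed

lemma has_vector_derivative_exp_complex:
  "((\<lambda>s. exp (k * complex_of_real s)) has_vector_derivative k * exp (k * complex_of_real s)) (at s within S)"
proof -
  have "((\<lambda>s. k * complex_of_real s) has_vector_derivative k * 1) (at s within S)"
    by (intro has_vector_derivative_mult_right has_vector_derivative_of_real) (auto intro!: derivative_eq_intros)
  from field_vector_diff_chain_within[OF this DERIV_exp[THEN has_field_derivative_at_within]]
  show ?thesis by (simp add: o_def)
qed

lemma has_vector_derivative_mult_self_imp_exp:
  fixes f :: "real \<Rightarrow> complex"
  assumes f': "\<And>t. t \<in> {0..T} \<Longrightarrow> (f has_vector_derivative k * f t) (at t within {0..T})"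
    and t: "t \<in> {0..T}"
  shows "f t = f 0 * exp (k * of_real t)"
proof -
  define g where "g s = f s * exp (- k * of_real s)" for s
  have "(g has_derivative (\<lambda>h. 0)) (at s within {0..T})" if "s \<in> {0..T}" for s
  proof -
    have "(g has_vector_derivative f s * (- k * exp (- k * of_real s)) + k * f s * exp (- k * of_real s))
        (at s within {0..T})"
      unfolding g_def by (intro has_vector_derivative_mult f' that has_vector_derivative_exp_complex)
    then show ?thesis by (simp add: has_vector_derivative_def algebra_simps)
  qed
  then obtain C where "\<And>s. s \<in> {0..T} \<Longrightarrow> g s = C"
    using has_derivative_zero_constant[of "{0..T}" g] by auto
  then have "g t = g 0" using t by force
  then show ?thesis by (simp add: g_def exp_minus field_simps)
qed

lemma has_integral_power_over_fact:
  fixes K t :: real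
  assumes "0 \<le> t"
  shows "((\<lambda>s. K * (K * s)^n / fact n) has_integral (K * t)^Suc n / fact (Suc n)) {0..t}"
proof -
  have "((\<lambda>s. K^Suc n / fact (Suc n) * s^Suc n) has_real_derivative
      K^Suc n / fact (Suc n) * (of_nat (Suc n) * x^n)) (at x within {0..t})" for x
    using DERIV_pow[of "Suc n" x "{0..t}"] by (intro DERIV_cmult) simp
  moreover have "K^Suc n / fact (Suc n) * (of_nat (Suc n) * x^n) = K * (K * x)^n / fact n" for x
    by (simp add: fact_Suc power_mult_distrib field_simps del: of_nat_Suc)
  moreover have "(\<lambda>s. K^Suc n / fact (Suc n) * s^Suc n) = (\<lambda>s. (K * s)^Suc n / fact (Suc n))"
    by (simp add: power_mult_distrib fun_eq_iff)
  ultimately have "((\<lambda>s. (K * s)^Suc n / fact (Suc n)) has_vector_derivative K * (K * x)^n / fact n)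
      (at x within {0..t})" for x
    by (metis has_real_derivative_iff_has_vector_derivative)
  from fundamental_theorem_of_calculus[OF assms this] show ?thesis by simp
qed

lemma summable_exp_series_scaled: "summable (\<lambda>n. E * K^n / fact n :: real)"
  using summable_mult[OF summable_exp[of K], of E] by (simp add: field_simps)

lemma has_vector_derivative_series:
  fixes f :: "nat \<Rightarrow> real \<Rightarrow> 'a::banach"
  assumes "convex S"
    and "\<And>n x. x \<in> S \<Longrightarrow> (f n has_vector_derivative f' n x) (at x within S)"
    and "uniform_limit S (\<lambda>n x. \<Sum>i<n. f' i x) g' sequentially"
    and "x0 \<in> S" "summable (\<lambda>n. f n x0)"
  shows "\<exists>g. \<forall>x\<in>S. (\<lambda>n. f n x) sums g x \<and> (g has_vector_derivative g' x) (at x within S)"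
  unfolding has_vector_derivative_def
proof (rule has_derivative_series)
  fix e :: real assume "e > 0"
  have "\<forall>\<^sub>F n in sequentially. \<forall>x\<in>S. norm ((\<Sum>i<n. f' i x) - g' x) \<le> e"
    using uniform_limitD[OF assms(3) \<open>e > 0\<close>] by eventually_elim (auto simp: dist_norm)
  then show "\<forall>\<^sub>F n in sequentially. \<forall>x\<in>S. \<forall>h. norm ((\<Sum>i<n. h *\<^sub>R f' i x) - h *\<^sub>R g' x) \<le> e * norm h"
    by eventually_elim
      (auto simp: scaleR_sum_right[symmetric] scaleR_diff_right[symmetric] mult.commute[of _ "\<bar>_\<bar>"]
        intro: mult_left_mono)
qed (use assms in \<open>auto simp: has_vector_derivative_def summable_sums\<close>)

lemma fixed_vector_imp_det_eq_0:
  fixes a b c d x y :: "'a::field"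
  assumes "x = x * a + y * c" "y = x * b + y * d" "x \<noteq> 0 \<or> y \<noteq> 0"
  shows "(a - 1) * (d - 1) - c * b = 0"
proof -
  have "((a - 1) * (d - 1) - c * b) * x = (d - 1) * ((a - 1) * x + c * y) - c * (b * x + (d - 1) * y)"
    and "((a - 1) * (d - 1) - c * b) * y = (a - 1) * (b * x + (d - 1) * y) - b * ((a - 1) * x + c * y)"
    by (simp_all add: algebra_simps)
  moreover have "(a - 1) * x + c * y = 0" "b * x + (d - 1) * y = 0"
    using assms(1,2) by (simp_all add: algebra_simps)
  ultimately show ?thesis using assms(3) by auto
qed

lemma singular_imp_nontrivial_kernel:
  fixes a b c d :: "'a::field"
  assumes det: "a * d - c * b = 0"
  obtains v1 v2 where "v1 \<noteq> 0 \<or> v2 \<noteq> 0" "a * v1 + c * v2 = 0" "b * v1 + d * v2 = 0"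
proof -
  consider "a = 0" "c = 0" "b = 0" "d = 0" | "a = 0" "c = 0" "b \<noteq> 0 \<or> d \<noteq> 0" | "a \<noteq> 0 \<or> c \<noteq> 0"
    by blast
  then show ?thesis
  proof cases
    case 1
    then show ?thesis by (intro that[of 1 0]) simp_all
  next
    case 2
    then show ?thesis by (intro that[of d "- b"]) (auto simp: mult.commute)
  next
    case 3
    have "b * c + d * - a = - (a * d - c * b)" by (simp add: algebra_simps)
    with 3 det show ?thesis by (intro that[of c "- a"]) (auto simp: mult.commute)
  qed
qed

lemma not_islimpt_zeros_of_entire:
  fixes f :: "complex \<Rightarrow> complex"
  assumes "f holomorphic_on UNIV" "f w \<noteq> 0"
  shows "\<not> z islimpt {x. f x = 0}"
  using analytic_continuation[OF assms(1) open_UNIV connected_UNIV subset_UNIV UNIV_I _ _ UNIV_I] assms(2)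
  by blast

definition radial :: "complex \<Rightarrow> real \<Rightarrow> complex" where "radial s r = exp (s * of_real (ln r))"

lemma basic_form_eq_radial: "0 < r \<Longrightarrow> basic_form s \<phi> \<psi> r t = radial s r * \<phi> t + cnj (radial s r * \<psi> t)"
  by (simp add: basic_form_def radial_def powr_def Ln_of_real)

lemma radial_1 [simp]: "radial s 1 = 1"
  by (simp add: radial_def)

lemma cnj_radial_real: "s \<in> \<real> \<Longrightarrow> cnj (radial s r) = radial s r"
  by (auto simp: radial_def exp_of_real simp flip: of_real_mult elim!: Reals_cases)

lemma radial_imaginary_exists:
  assumes "Im s \<noteq> 0"
  obtains r where "0 < r" "cnj (radial s r) = - radial s r"
proof
  let ?r = "exp (pi / (2 * Im s))"
  have "s * of_real (ln ?r) = of_real (Re s * pi / (2 * Im s)) + \<i> * of_real (pi / 2)"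
    using assms by (simp add: complex_eq_iff)
  moreover have "exp (\<i> * of_real (pi / 2)) = \<i>"
    by (simp only: cis_conv_exp[symmetric] cis_pi_half)
  ultimately have "radial s ?r = of_real (exp (Re s * pi / (2 * Im s))) * \<i>"
    unfolding radial_def by (simp only: exp_add exp_of_real)
  then show "cnj (radial s ?r) = - radial s ?r" by simp
qed simp

lemma has_vector_derivative_radial:
  assumes "0 < r"
  shows "(radial s has_vector_derivative s / of_real r * radial s r) (at r)"
proof -
  have "((\<lambda>\<rho>. s * of_real (ln \<rho>)) has_vector_derivative s * of_real (1 / r)) (at r)"
    by (intro has_vector_derivative_mult_right has_vector_derivative_of_real DERIV_ln_divide assms)
  from field_vector_diff_chain_at[OF this DERIV_exp] show ?thesis
    by (simp add: radial_def[abs_def] o_def divide_inverse mult.assoc of_real_inverse)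
qed

lemma has_vector_derivative_basic_form_radius:
  assumes "0 < r"
  shows "((\<lambda>\<rho>. basic_form s \<phi> \<psi> \<rho> t) has_vector_derivative
     s / of_real r * radial s r * \<phi> t + cnj (s / of_real r * radial s r * \<psi> t)) (at r)"
proof (rule has_vector_derivative_transform_within_open[of _ _ _ "{0<..}"])
  show "((\<lambda>\<rho>. radial s \<rho> * \<phi> t + cnj (radial s \<rho> * \<psi> t)) has_vector_derivative
      s / of_real r * radial s r * \<phi> t + cnj (s / of_real r * radial s r * \<psi> t)) (at r)"
    by (intro has_vector_derivative_add has_vector_derivative_cnj has_vector_derivative_mult_left
        has_vector_derivative_radial assms)
qed (use assms basic_form_eq_radial in auto)

locale exponent_ode =
  fixes lm :: complex and nu :: real and c :: "real \<Rightarrow> complex"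
  assumes lm_nonzero: "lm \<noteq> 0" and c_continuous: "continuous_on UNIV c"
begin

definition diag1 :: "complex \<Rightarrow> complex" where "diag1 z = \<i> * z / lm - \<i> * of_real nu"
definition diag2 :: "complex \<Rightarrow> complex" where "diag2 z = - \<i> * z / cnj lm + \<i> * of_real nu"
definition coupling1 :: "real \<Rightarrow> complex" where "coupling1 t = c t / lm"
definition coupling2 :: "real \<Rightarrow> complex" where "coupling2 t = cnj (c t) / cnj lm"

text \<open>The system is  Z1' = rhs z True Z1 Z2,  Z2' = rhs z False Z1 Z2; the Boolean selects the
  component. For z = \<sigma> it is the system satisfied by the profiles \<phi>, \<psi> of a basic solution.\<close>
definition rhs :: "complex \<Rightarrow> bool \<Rightarrow> complex \<Rightarrow> complex \<Rightarrow> real \<Rightarrow> complex" where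
  "rhs z b y1 y2 t = (if b then diag1 z * y1 + coupling1 t * y2 else diag2 z * y2 + coupling2 t * y1)"

definition slope :: "bool \<Rightarrow> complex" where "slope b = (if b then \<i> / lm else - \<i> / cnj lm)"

lemma rhs_affine: "rhs z b y1 y2 t = rhs 0 b y1 y2 t + z * slope b * (if b then y1 else y2)"
  by (simp add: rhs_def slope_def diag1_def diag2_def algebra_simps)

lemma rhs_sum: "(\<Sum>j\<in>A. w j * rhs z b (f j) (g j) t) = rhs z b (\<Sum>j\<in>A. w j * f j) (\<Sum>j\<in>A. w j * g j) t"
  by (simp add: rhs_def sum.distrib sum_distrib_left algebra_simps)

lemma rhs_suminf:
  assumes "summable f" "summable g"
  shows "(\<Sum>n. rhs z b (f n) (g n) t) = rhs z b (suminf f) (suminf g) t"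
  using assms by (simp add: rhs_def suminf_add[symmetric] summable_mult suminf_mult)

lemma continuous_on_rhs:
  "continuous_on S y1 \<Longrightarrow> continuous_on S y2 \<Longrightarrow> continuous_on S (\<lambda>t. rhs z b (y1 t) (y2 t) t)"
  unfolding rhs_def coupling1_def coupling2_def
  by (cases b) (auto intro!: continuous_intros continuous_on_subset[OF c_continuous] simp: lm_nonzero)

text \<open>picard_coeff i n j b is the coefficient of z^j in component b of the n-th term of the
  Picard series for the solution starting at the unit vector e_i. Separating the polynomial
  dependence on z makes holomorphy in z evident.\<close>
primrec picard_coeff :: "bool \<Rightarrow> nat \<Rightarrow> nat \<Rightarrow> bool \<Rightarrow> real \<Rightarrow> complex" where
  "picard_coeff i 0 j b t = of_bool (j = 0 \<and> b = i)"
| "picard_coeff i (Suc n) j b t = integral {0..t} (\<lambda>s.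
     rhs 0 b (picard_coeff i n j True s) (picard_coeff i n j False s) s
     + (if j = 0 then 0 else slope b * picard_coeff i n (j - 1) b s))"

definition picard_integrand :: "bool \<Rightarrow> nat \<Rightarrow> nat \<Rightarrow> bool \<Rightarrow> real \<Rightarrow> complex" where
  "picard_integrand i n j b s = rhs 0 b (picard_coeff i n j True s) (picard_coeff i n j False s) s
     + (if j = 0 then 0 else slope b * picard_coeff i n (j - 1) b s)"

lemma picard_coeff_Suc: "picard_coeff i (Suc n) j b = (\<lambda>t. integral {0..t} (picard_integrand i n j b))"
  by (simp add: picard_integrand_def[abs_def] fun_eq_iff)

lemma continuous_on_picard_integrand:
  assumes "\<And>j b. continuous_on S (picard_coeff i n j b)"
  shows "continuous_on S (picard_integrand i n j b)"
  unfolding picard_integrand_def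
  by (cases "j = 0") (auto intro!: continuous_intros continuous_on_rhs assms)

lemma continuous_on_picard_coeff: "continuous_on {0..T} (picard_coeff i n j b)"
proof (induction n arbitrary: j b)
  case (Suc n)
  show ?case
    unfolding picard_coeff_Suc
    by (rule continuous_on_vector_derivative, rule integral_has_vector_derivative)
      (auto intro: continuous_on_picard_integrand Suc.IH)
qed simp

lemma has_vector_derivative_picard_coeff:
  "t \<in> {0..T} \<Longrightarrow>
    (picard_coeff i (Suc n) j b has_vector_derivative picard_integrand i n j b t) (at t within {0..T})"
  unfolding picard_coeff_Suc
  by (intro integral_has_vector_derivative continuous_on_picard_integrand continuous_on_picard_coeff)

lemma picard_coeff_eq_0: "n < j \<Longrightarrow> picard_coeff i n j b t = 0"
proof (induction n arbitrary: j b t)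
  case (Suc n)
  then have "picard_integrand i n j b = (\<lambda>s. 0)"
    by (auto simp: picard_integrand_def rhs_def fun_eq_iff)
  then show ?case by (simp add: picard_coeff_Suc)
qed simp

definition picard_term :: "bool \<Rightarrow> nat \<Rightarrow> complex \<Rightarrow> bool \<Rightarrow> real \<Rightarrow> complex" where
  "picard_term i n z b t = (\<Sum>j\<le>n. z^j * picard_coeff i n j b t)"

lemma picard_term_0: "picard_term i 0 z b t = of_bool (b = i)"
  by (simp add: picard_term_def)

lemma picard_term_Suc_at_0: "picard_term i (Suc n) z b 0 = 0"
  by (simp add: picard_term_def)

lemma sum_picard_integrand:
  "(\<Sum>j\<le>Suc n. z^j * picard_integrand i n j b t)
     = rhs z b (picard_term i n z True t) (picard_term i n z False t) t"
proof -
  have extend: "(\<Sum>j\<le>Suc n. z^j * picard_coeff i n j b' t) = picard_term i n z b' t" for b'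
    by (simp add: picard_term_def picard_coeff_eq_0)
  have shift: "(\<Sum>j\<le>Suc n. z^j * (if j = 0 then 0 else slope b * picard_coeff i n (j - 1) b t))
      = z * slope b * picard_term i n z b t"
    by (subst sum.atMost_Suc_shift) (simp add: picard_term_def sum_distrib_left algebra_simps)
  show ?thesis
    unfolding picard_integrand_def distrib_left sum.distrib rhs_sum extend shift
    by (subst (2) rhs_affine) simp
qed

lemma has_vector_derivative_picard_term:
  "t \<in> {0..T} \<Longrightarrow> (picard_term i (Suc n) z b has_vector_derivative
     rhs z b (picard_term i n z True t) (picard_term i n z False t) t) (at t within {0..T})"
  unfolding sum_picard_integrand[symmetric] unfolding picard_term_def[abs_def]
  by (intro has_vector_derivative_sum has_vector_derivative_mult_right has_vector_derivative_picard_coeff)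

lemma rhs_bound_exists:
  "\<exists>M\<ge>0. \<forall>s\<in>{0..T}. \<forall>z\<in>cball 0 R. \<forall>b y1 y2. norm (rhs z b y1 y2 s) \<le> M * (norm y1 + norm y2)"
proof -
  have "compact (c ` {0..T})"
    by (rule compact_continuous_image[OF continuous_on_subset[OF c_continuous]]) auto
  then obtain B where B: "\<And>s. s \<in> {0..T} \<Longrightarrow> norm (c s) \<le> B"
    using compact_imp_bounded bounded_iff by (metis imageI)
  define M where "M = (\<bar>R\<bar> + \<bar>B\<bar>) / norm lm + \<bar>nu\<bar>"
  have diag: "norm (diag1 z) \<le> M \<and> norm (diag2 z) \<le> M" if "z \<in> cball 0 R" for z
  proof -
    have "norm z / norm lm \<le> (\<bar>R\<bar> + \<bar>B\<bar>) / norm lm"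
      using that by (auto intro!: divide_right_mono)
    then show ?thesis
      unfolding diag1_def diag2_def M_def
      using norm_triangle_ineq4[of "\<i> * z / lm" "\<i> * of_real nu"]
        norm_triangle_ineq[of "- \<i> * z / cnj lm" "\<i> * of_real nu"]
      by (auto simp: norm_divide norm_mult)
  qed
  have coupling: "norm (coupling1 s) \<le> M \<and> norm (coupling2 s) \<le> M" if "s \<in> {0..T}" for s
  proof -
    have "norm (c s) / norm lm \<le> (\<bar>R\<bar> + \<bar>B\<bar>) / norm lm"
      using B[OF that] by (auto intro!: divide_right_mono)
    then show ?thesis
      unfolding coupling1_def coupling2_def M_def by (simp add: norm_divide)
  qed
  have lin: "norm (d * x + k * y) \<le> M * (norm x + norm y)" if "norm d \<le> M" "norm k \<le> M" for d k x y :: complex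
    using that by (auto simp: norm_mult distrib_left intro!: order.trans[OF norm_triangle_ineq] add_mono mult_right_mono)
  have "norm (rhs z b y1 y2 s) \<le> M * (norm y1 + norm y2)" if "s \<in> {0..T}" "z \<in> cball 0 R" for s z b y1 y2
    using diag[OF that(2)] coupling[OF that(1)] lin[of "diag1 z" "coupling1 s" y1 y2]
      lin[of "diag2 z" "coupling2 s" y2 y1]
    unfolding rhs_def by (cases b) (auto simp: add.commute)
  moreover have "M \<ge> 0" by (simp add: M_def)
  ultimately show ?thesis by blast
qed

lemma norm_picard_term_le:
  assumes M: "\<And>s b y1 y2. s \<in> {0..T} \<Longrightarrow> norm (rhs z b y1 y2 s) \<le> M * (norm y1 + norm y2)"
    and t: "t \<in> {0..T}"
  shows "norm (picard_term i n z b t) \<le> (2 * M * t)^n / fact n"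
  using t
proof (induction n arbitrary: t b)
  case 0
  show ?case by (simp add: picard_term_0)
next
  case (Suc n)
  have "0 \<le> t" using Suc.prems by simp
  have "0 \<le> M" using M[OF Suc.prems, of True 1 1] by (simp, smt (verit) norm_ge_zero)
  let ?D = "\<lambda>s. rhs z b (picard_term i n z True s) (picard_term i n z False s) s"
  have D: "(?D has_integral picard_term i (Suc n) z b t) {0..t}"
    using fundamental_theorem_of_calculus[OF \<open>0 \<le> t\<close> has_vector_derivative_picard_term]
    by (simp add: picard_term_Suc_at_0)
  have bound: "norm (?D s) \<le> (2 * M) * ((2 * M) * s)^n / fact n" if "s \<in> {0..t}" for s
  proof -
    have s: "s \<in> {0..T}" using that Suc.prems by auto
    have "norm (?D s) \<le> M * (norm (picard_term i n z True s) + norm (picard_term i n z False s))"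
      by (rule M[OF s])
    also have "\<dots> \<le> M * ((2 * M * s)^n / fact n + (2 * M * s)^n / fact n)"
      using Suc.IH[OF s] \<open>0 \<le> M\<close> by (intro mult_left_mono add_mono) auto
    finally show ?thesis by (simp only: mult_2 distrib_left distrib_right add_divide_distrib mult_1_right times_divide_eq_right)
  qed
  note majorant = has_integral_power_over_fact[OF \<open>0 \<le> t\<close>, of "2 * M" n]
  have "norm (integral {0..t} ?D) \<le> integral {0..t} (\<lambda>s. (2 * M) * ((2 * M) * s)^n / fact n)"
    using D majorant bound by (intro integral_norm_bound_integral) (auto simp: has_integral_integrable)
  then show ?case
    using integral_unique[OF D] integral_unique[OF majorant] by simp
qed

lemma picard_term_bound_exists:
  "\<exists>K. \<forall>n. \<forall>t\<in>{0..T}. \<forall>z\<in>cball 0 R. \<forall>b. norm (picard_term i n z b t) \<le> K^n / fact n"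
proof -
  obtain M where "M \<ge> 0"
    and M: "\<forall>s\<in>{0..T}. \<forall>z\<in>cball 0 R. \<forall>b y1 y2. norm (rhs z b y1 y2 s) \<le> M * (norm y1 + norm y2)"
    using rhs_bound_exists by blast
  have "norm (picard_term i n z b t) \<le> (2 * M * T)^n / fact n" if "t \<in> {0..T}" "z \<in> cball 0 R" for n t z b
  proof -
    have "norm (picard_term i n z b t) \<le> (2 * M * t)^n / fact n"
      using M that by (intro norm_picard_term_le) auto
    also have "\<dots> \<le> (2 * M * T)^n / fact n"
      using that \<open>M \<ge> 0\<close> by (intro divide_right_mono power_mono mult_left_mono) auto
    finally show ?thesis .
  qed
  then show ?thesis by blast
qed

lemma summable_picard_term:
  assumes "0 \<le> t"
  shows "summable (\<lambda>n. picard_term i n z b t)"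
proof -
  obtain K where "\<And>n. norm (picard_term i n z b t) \<le> K^n / fact n"
    using picard_term_bound_exists[of t "norm z" i] assms by fastforce
  then show ?thesis
    by (intro summable_comparison_test[OF _ summable_exp_series_scaled[of 1 K]]) auto
qed

text \<open>Component b, at time t, of the solution starting at the unit vector e_i.\<close>
definition fundamental :: "bool \<Rightarrow> complex \<Rightarrow> bool \<Rightarrow> real \<Rightarrow> complex" where
  "fundamental i z b t = (\<Sum>n. picard_term i n z b t)"

lemma fundamental_eq_Suc_sum:
  "0 \<le> t \<Longrightarrow> fundamental i z b t = of_bool (b = i) + (\<Sum>n. picard_term i (Suc n) z b t)"
  unfolding fundamental_def by (subst suminf_split_head) (auto simp: summable_picard_term picard_term_0)

lemma fundamental_at_0: "fundamental i z b 0 = of_bool (b = i)"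
  by (simp add: fundamental_eq_Suc_sum picard_term_Suc_at_0)

lemma has_vector_derivative_fundamental:
  assumes t: "t \<in> {0..T}"
  shows "(fundamental i z b has_vector_derivative rhs z b (fundamental i z True t) (fundamental i z False t) t)
    (at t within {0..T})"
proof -
  obtain K where K: "\<And>n s b. s \<in> {0..T} \<Longrightarrow> norm (picard_term i n z b s) \<le> K^n / fact n"
    using picard_term_bound_exists[of T "norm z" i] by fastforce
  obtain M where "M \<ge> 0"
    and M: "\<And>s b y1 y2. s \<in> {0..T} \<Longrightarrow> norm (rhs z b y1 y2 s) \<le> M * (norm y1 + norm y2)"
    using rhs_bound_exists[of T "norm z"] by auto
  let ?f' = "\<lambda>n s. rhs z b (picard_term i n z True s) (picard_term i n z False s) s"
  have ulim: "uniform_limit {0..T} (\<lambda>N s. \<Sum>n<N. ?f' n s) (\<lambda>s. \<Sum>n. ?f' n s) sequentially"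
  proof (rule Weierstrass_m_test)
    show "norm (?f' n s) \<le> 2 * M * K^n / fact n" if "s \<in> {0..T}" for n s
    proof -
      have "norm (?f' n s) \<le> M * (K^n / fact n + K^n / fact n)"
        using M[OF that] K[OF that] \<open>M \<ge> 0\<close> by (meson add_mono mult_left_mono order_trans)
      then show ?thesis by (simp only: mult_2 distrib_left distrib_right add_divide_distrib times_divide_eq_right)
    qed
  qed (rule summable_exp_series_scaled)
  have "\<exists>g. \<forall>s\<in>{0..T}. (\<lambda>n. picard_term i (Suc n) z b s) sums g s
      \<and> (g has_vector_derivative (\<Sum>n. ?f' n s)) (at s within {0..T})"
    by (rule has_vector_derivative_series[OF _ _ ulim t])
      (use t summable_Suc_iff[of "\<lambda>n. picard_term i n z b t"] summable_picard_term[of t] in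
        \<open>auto intro: has_vector_derivative_picard_term\<close>)
  then obtain g where g: "\<And>s. s \<in> {0..T} \<Longrightarrow> (\<lambda>n. picard_term i (Suc n) z b s) sums g s"
    and g': "(g has_vector_derivative (\<Sum>n. ?f' n t)) (at t within {0..T})"
    using t by blast
  have "(\<Sum>n. ?f' n t) = rhs z b (fundamental i z True t) (fundamental i z False t) t"
    unfolding fundamental_def using t by (intro rhs_suminf summable_picard_term) auto
  moreover have "fundamental i z b s = of_bool (b = i) + g s" if "s \<in> {0..T}" for s
    using that g[OF that] by (simp add: fundamental_eq_Suc_sum sums_iff)
  ultimately show ?thesis
    using has_vector_derivative_transform[OF t _ has_vector_derivative_add[OF has_vector_derivative_const g']]
    by simp
qed

lemma holomorphic_fundamental:
  assumes "0 \<le> T"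
  shows "(\<lambda>z. fundamental i z b T) holomorphic_on UNIV"
proof (rule holomorphic_on_balls_imp_entire')
  fix R :: real
  obtain K where K: "\<And>n z. z \<in> cball 0 R \<Longrightarrow> norm (picard_term i n z b T) \<le> K^n / fact n"
    using picard_term_bound_exists[of T R i] assms by fastforce
  have "uniform_limit (cball 0 R) (\<lambda>N z. \<Sum>n<N. picard_term i n z b T) (\<lambda>z. fundamental i z b T) sequentially"
    unfolding fundamental_def by (rule Weierstrass_m_test[OF K summable_exp_series_scaled[of 1 K, simplified]])
  then show "(\<lambda>z. fundamental i z b T) holomorphic_on ball 0 R"
    by (rule holomorphic_uniform_limit[rotated])
      (auto intro!: always_eventually holomorphic_on_imp_continuous_on holomorphic_intros simp: picard_term_def)
qed

definition solves_on :: "complex \<Rightarrow> (real \<Rightarrow> complex) \<Rightarrow> (real \<Rightarrow> complex) \<Rightarrow> real \<Rightarrow> bool" where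
  "solves_on z Z1 Z2 T \<longleftrightarrow> (\<forall>t\<in>{0..T}.
     (Z1 has_vector_derivative rhs z True (Z1 t) (Z2 t) t) (at t within {0..T}) \<and>
     (Z2 has_vector_derivative rhs z False (Z1 t) (Z2 t) t) (at t within {0..T}))"

lemma solves_on_fundamental: "solves_on z (fundamental i z True) (fundamental i z False) T"
  unfolding solves_on_def using has_vector_derivative_fundamental by blast

lemma solves_on_lincomb:
  assumes "solves_on z X1 X2 T" "solves_on z U1 U2 T"
  shows "solves_on z (\<lambda>t. u * X1 t + v * U1 t) (\<lambda>t. u * X2 t + v * U2 t) T"
  unfolding solves_on_def
proof (intro ballI conjI)
  fix t assume t: "t \<in> {0..T}"
  have "rhs z b (u * X1 t + v * U1 t) (u * X2 t + v * U2 t) t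
      = u * rhs z b (X1 t) (X2 t) t + v * rhs z b (U1 t) (U2 t) t" for b
    by (simp add: rhs_def algebra_simps)
  then show "((\<lambda>t. u * X1 t + v * U1 t) has_vector_derivative
        rhs z True (u * X1 t + v * U1 t) (u * X2 t + v * U2 t) t) (at t within {0..T})"
    and "((\<lambda>t. u * X2 t + v * U2 t) has_vector_derivative
        rhs z False (u * X1 t + v * U1 t) (u * X2 t + v * U2 t) t) (at t within {0..T})"
    using assms t unfolding solves_on_def
    by (auto intro!: has_vector_derivative_add has_vector_derivative_mult_right)
qed

lemma has_vector_derivative_wronskian:
  assumes "solves_on z X1 X2 T" "solves_on z U1 U2 T" "t \<in> {0..T}"
  shows "((\<lambda>t. X1 t * U2 t - X2 t * U1 t) has_vector_derivative
      (diag1 z + diag2 z) * (X1 t * U2 t - X2 t * U1 t)) (at t within {0..T})"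
proof -
  have "((\<lambda>t. X1 t * U2 t - X2 t * U1 t) has_vector_derivative
     (X1 t * rhs z False (U1 t) (U2 t) t + rhs z True (X1 t) (X2 t) t * U2 t)
    - (X2 t * rhs z True (U1 t) (U2 t) t + rhs z False (X1 t) (X2 t) t * U1 t)) (at t within {0..T})"
    using assms unfolding solves_on_def by (intro has_vector_derivative_diff has_vector_derivative_mult) auto
  then show ?thesis by (simp add: rhs_def algebra_simps)
qed

text \<open>Uniqueness: each Wronskian of two solutions is a multiple of exp ((diag1 z + diag2 z) t), and the
  Wronskian of the fundamental solutions never vanishes.\<close>
lemma solves_on_eq_fundamental_combination:
  assumes Z: "solves_on z Z1 Z2 T" and t: "t \<in> {0..T}"
  shows "Z1 t = Z1 0 * fundamental True z True t + Z2 0 * fundamental False z True t"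
    and "Z2 t = Z1 0 * fundamental True z False t + Z2 0 * fundamental False z False t"
proof -
  let ?k = "diag1 z + diag2 z" and ?e = "exp ((diag1 z + diag2 z) * of_real t)"
  let ?a = "fundamental True z True" and ?b = "fundamental True z False"
    and ?c = "fundamental False z True" and ?d = "fundamental False z False"
  have S1: "solves_on z ?a ?b T" and S2: "solves_on z ?c ?d T"
    by (rule solves_on_fundamental)+
  have W: "?a t * ?d t - ?b t * ?c t = ?e"
    using has_vector_derivative_mult_self_imp_exp[OF has_vector_derivative_wronskian[OF S1 S2] t]
    by (simp add: fundamental_at_0)
  have W1: "Z1 t * ?d t - Z2 t * ?c t = Z1 0 * ?e"
    using has_vector_derivative_mult_self_imp_exp[OF has_vector_derivative_wronskian[OF Z S2] t]
    by (simp add: fundamental_at_0)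
  have W2: "?a t * Z2 t - ?b t * Z1 t = Z2 0 * ?e"
    using has_vector_derivative_mult_self_imp_exp[OF has_vector_derivative_wronskian[OF S1 Z] t]
    by (simp add: fundamental_at_0)
  have "Z1 t * (?a t * ?d t - ?b t * ?c t)
      = (Z1 t * ?d t - Z2 t * ?c t) * ?a t + (?a t * Z2 t - ?b t * Z1 t) * ?c t"
    and "Z2 t * (?a t * ?d t - ?b t * ?c t)
      = (Z1 t * ?d t - Z2 t * ?c t) * ?b t + (?a t * Z2 t - ?b t * Z1 t) * ?d t"
    by (simp_all add: algebra_simps)
  then have "Z1 t * ?e = (Z1 0 * ?a t + Z2 0 * ?c t) * ?e" "Z2 t * ?e = (Z1 0 * ?b t + Z2 0 * ?d t) * ?e"
    unfolding W W1 W2 by (simp_all add: algebra_simps)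
  then show "Z1 t = Z1 0 * ?a t + Z2 0 * ?c t" "Z2 t = Z1 0 * ?b t + Z2 0 * ?d t"
    by simp_all
qed

definition monodromy_det :: "real \<Rightarrow> complex \<Rightarrow> complex" where
  "monodromy_det T z = (fundamental True z True T - 1) * (fundamental False z False T - 1)
     - fundamental False z True T * fundamental True z False T"

lemma holomorphic_monodromy_det: "0 \<le> T \<Longrightarrow> monodromy_det T holomorphic_on UNIV"
  unfolding monodromy_det_def[abs_def] by (intro holomorphic_intros holomorphic_fundamental)

lemma monodromy_det_eq_0:
  assumes Z: "solves_on z Z1 Z2 T" and "0 \<le> T"
    and periodic: "Z1 T = Z1 0" "Z2 T = Z2 0" and nontrivial: "Z1 0 \<noteq> 0 \<or> Z2 0 \<noteq> 0"
  shows "monodromy_det T z = 0"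
proof -
  have "T \<in> {0..T}" using \<open>0 \<le> T\<close> by simp
  from solves_on_eq_fundamental_combination[OF Z this] periodic
  show ?thesis unfolding monodromy_det_def by (intro fixed_vector_imp_det_eq_0[OF _ _ nontrivial]) simp_all
qed

text \<open>At this exponent the diagonal coefficients are cnj lm - i nu and -(lm - i nu), so the
  indefinite energy |Z1|^2 - |Z2|^2 of a solution grows at the rate 2 Re lm (|Z1|^2 + |Z2|^2).\<close>
definition dissipative_exponent :: complex where "dissipative_exponent = - \<i> * lm * cnj lm"

lemma has_vector_derivative_energy:
  assumes "solves_on dissipative_exponent Z1 Z2 T" "t \<in> {0..T}"
  shows "((\<lambda>t. Re (Z1 t * cnj (Z1 t) - Z2 t * cnj (Z2 t))) has_vector_derivative
      2 * Re lm * ((cmod (Z1 t))^2 + (cmod (Z2 t))^2)) (at t within {0..T})"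
proof -
  have diag: "diag1 dissipative_exponent = cnj lm - \<i> * of_real nu"
    "diag2 dissipative_exponent = - lm + \<i> * of_real nu"
    using lm_nonzero by (simp_all add: diag1_def diag2_def dissipative_exponent_def)
  have "Re (Z1 t * cnj (rhs dissipative_exponent True (Z1 t) (Z2 t) t)
      + rhs dissipative_exponent True (Z1 t) (Z2 t) t * cnj (Z1 t)
      - (Z2 t * cnj (rhs dissipative_exponent False (Z1 t) (Z2 t) t)
      + rhs dissipative_exponent False (Z1 t) (Z2 t) t * cnj (Z2 t)))
    = 2 * Re lm * ((cmod (Z1 t))^2 + (cmod (Z2 t))^2)"
    unfolding rhs_def coupling1_def coupling2_def diag cmod_power2 by (simp add: algebra_simps power2_eq_square)
  moreover have "((\<lambda>t. Z1 t * cnj (Z1 t) - Z2 t * cnj (Z2 t)) has_vector_derivative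
      Z1 t * cnj (rhs dissipative_exponent True (Z1 t) (Z2 t) t)
      + rhs dissipative_exponent True (Z1 t) (Z2 t) t * cnj (Z1 t)
      - (Z2 t * cnj (rhs dissipative_exponent False (Z1 t) (Z2 t) t)
      + rhs dissipative_exponent False (Z1 t) (Z2 t) t * cnj (Z2 t))) (at t within {0..T})"
    using assms unfolding solves_on_def
    by (intro has_vector_derivative_diff has_vector_derivative_mult has_vector_derivative_cnj) auto
  ultimately show ?thesis
    unfolding has_vector_derivative_complex_iff by (simp add: has_real_derivative_iff_has_vector_derivative)
qed

lemma periodic_solution_at_dissipative_exponent_trivial:
  assumes "Re lm > 0" "0 < T" and Z: "solves_on dissipative_exponent Z1 Z2 T"
    and periodic: "Z1 T = Z1 0" "Z2 T = Z2 0"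
  shows "Z1 0 = 0 \<and> Z2 0 = 0"
proof -
  let ?E = "\<lambda>t. 2 * Re lm * ((cmod (Z1 t))^2 + (cmod (Z2 t))^2)"
  have "(?E has_integral 0) (cbox 0 T)"
    using fundamental_theorem_of_calculus[OF less_imp_le[OF \<open>0 < T\<close>] has_vector_derivative_energy[OF Z]]
      periodic by simp
  moreover have "continuous_on {0..T} Z1" "continuous_on {0..T} Z2"
    using Z unfolding solves_on_def by (auto intro!: continuous_on_vector_derivative)
  then have "continuous_on (cbox 0 T) ?E" by (auto intro!: continuous_intros)
  ultimately have "?E 0 = 0"
    using assms(1,2) by (intro has_integral_0_cbox_imp_0) auto
  then show ?thesis using \<open>Re lm > 0\<close> by (simp add: add_nonneg_eq_0_iff)
qed

lemma monodromy_det_dissipative_exponent_nonzero: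
  assumes "Re lm > 0" "0 < T"
  shows "monodromy_det T dissipative_exponent \<noteq> 0"
proof
  assume "monodromy_det T dissipative_exponent = 0"
  then obtain v1 v2 where v: "v1 \<noteq> 0 \<or> v2 \<noteq> 0"
    "(fundamental True dissipative_exponent True T - 1) * v1 + fundamental False dissipative_exponent True T * v2 = 0"
    "fundamental True dissipative_exponent False T * v1 + (fundamental False dissipative_exponent False T - 1) * v2 = 0"
    unfolding monodromy_det_def by (rule singular_imp_nontrivial_kernel)
  define Z1 where "Z1 t = v1 * fundamental True dissipative_exponent True t + v2 * fundamental False dissipative_exponent True t" for t
  define Z2 where "Z2 t = v1 * fundamental True dissipative_exponent False t + v2 * fundamental False dissipative_exponent False t" for t
  have "solves_on dissipative_exponent Z1 Z2 T"
    unfolding Z1_def[abs_def] Z2_def[abs_def] by (intro solves_on_lincomb solves_on_fundamental)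
  moreover have "Z1 0 = v1" "Z2 0 = v2" by (simp_all add: Z1_def Z2_def fundamental_at_0)
  moreover have "Z1 T = v1" "Z2 T = v2"
    using v(2,3) by (simp_all add: Z1_def Z2_def algebra_simps)
  ultimately show False
    using periodic_solution_at_dissipative_exponent_trivial[OF assms] v(1) by auto
qed

lemma cnj_rhs_real: "s \<in> \<real> \<Longrightarrow> cnj (rhs s False y1 y2 t) = rhs s True (cnj y2) (cnj y1) t"
  by (auto simp: rhs_def diag1_def diag2_def coupling1_def coupling2_def elim!: Reals_cases)

text \<open>The equation for a basic solution, solved for the t-derivative: the radial derivative is
  explicit, and what remains says that the profiles move according to the system for z = \<sigma>.\<close>
lemma has_vector_derivative_basic_form:
  assumes sol: "solves a b nu c \<epsilon> (basic_form \<sigma> \<phi> \<psi>)" and lm: "lm = lam a b \<epsilon>" and r: "0 < r"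
  shows "((\<lambda>s. basic_form \<sigma> \<phi> \<psi> r s) has_vector_derivative
     radial \<sigma> r * rhs \<sigma> True (\<phi> t) (\<psi> t) t + cnj (radial \<sigma> r * rhs \<sigma> False (\<phi> t) (\<psi> t) t)) (at t)"
proof -
  obtain wt wr where wt: "((\<lambda>s. basic_form \<sigma> \<phi> \<psi> r s) has_vector_derivative wt) (at t)"
    and wr: "((\<lambda>\<rho>. basic_form \<sigma> \<phi> \<psi> \<rho> t) has_vector_derivative wr) (at r)"
    and pde: "lm * wt - \<i> * of_real r * wr + \<i> * lm * of_real nu * basic_form \<sigma> \<phi> \<psi> r t
      - c t * cnj (basic_form \<sigma> \<phi> \<psi> r t) = 0"
    using sol r unfolding solves_def lm by blast
  let ?R = "radial \<sigma> r"
  let ?W = "\<i> * \<sigma> * ?R * \<phi> t + \<i> * cnj \<sigma> * cnj ?R * cnj (\<psi> t)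
    - \<i> * lm * of_real nu * (?R * \<phi> t + cnj ?R * cnj (\<psi> t)) + c t * (?R * \<psi> t + cnj ?R * cnj (\<phi> t))"
  have "wr = \<sigma> / of_real r * ?R * \<phi> t + cnj (\<sigma> / of_real r * ?R * \<psi> t)"
    using vector_derivative_unique_at[OF wr has_vector_derivative_basic_form_radius[OF r]] .
  then have "\<i> * of_real r * wr = \<i> * \<sigma> * ?R * \<phi> t + \<i> * cnj \<sigma> * cnj ?R * cnj (\<psi> t)"
    using r by (simp add: field_simps)
  with pde have "lm * wt = ?W"
    using r by (simp add: basic_form_eq_radial algebra_simps)
  moreover have "lm * (?R * rhs \<sigma> True (\<phi> t) (\<psi> t) t + cnj (?R * rhs \<sigma> False (\<phi> t) (\<psi> t) t)) = ?W"
    using lm_nonzero by (simp add: rhs_def diag1_def diag2_def coupling1_def coupling2_def field_simps)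
  ultimately have "wt = ?R * rhs \<sigma> True (\<phi> t) (\<psi> t) t + cnj (?R * rhs \<sigma> False (\<phi> t) (\<psi> t) t)"
    using lm_nonzero mult_left_cancel by metis
  with wt show ?thesis by simp
qed

definition periodic_solution :: "complex \<Rightarrow> (real \<Rightarrow> complex) \<Rightarrow> (real \<Rightarrow> complex) \<Rightarrow> bool" where
  "periodic_solution z Z1 Z2 \<longleftrightarrow>
     (\<forall>t. (Z1 has_vector_derivative rhs z True (Z1 t) (Z2 t) t) (at t) \<and>
          (Z2 has_vector_derivative rhs z False (Z1 t) (Z2 t) t) (at t)) \<and>
     periodic2pi Z1 \<and> periodic2pi Z2 \<and> (\<exists>t. Z1 t \<noteq> 0 \<or> Z2 t \<noteq> 0)"

lemma periodic_solution_real_exponent: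
  assumes sol: "solves a b nu c \<epsilon> (basic_form \<sigma> \<phi> \<psi>)" and lm: "lm = lam a b \<epsilon>" and "\<sigma> \<in> \<real>"
    and "periodic2pi \<phi>" "periodic2pi \<psi>" and nontrivial: "basic_form \<sigma> \<phi> \<psi> r t \<noteq> 0" "0 < r"
  shows "periodic_solution \<sigma> (\<lambda>t. \<phi> t + cnj (\<psi> t)) (\<lambda>t. cnj (\<phi> t + cnj (\<psi> t)))"
  unfolding periodic_solution_def
proof (intro conjI allI)
  fix t
  have "((\<lambda>t. \<phi> t + cnj (\<psi> t)) has_vector_derivative
      rhs \<sigma> True (\<phi> t) (\<psi> t) t + cnj (rhs \<sigma> False (\<phi> t) (\<psi> t) t)) (at t)"
    using has_vector_derivative_basic_form[OF sol lm zero_less_one, of t] by (simp add: basic_form_eq_radial)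
  moreover have "rhs \<sigma> True (\<phi> t) (\<psi> t) t + cnj (rhs \<sigma> False (\<phi> t) (\<psi> t) t)
      = rhs \<sigma> True (\<phi> t + cnj (\<psi> t)) (cnj (\<phi> t + cnj (\<psi> t))) t"
    using \<open>\<sigma> \<in> \<real>\<close> by (simp add: cnj_rhs_real) (simp add: rhs_def algebra_simps)
  ultimately show d: "((\<lambda>t. \<phi> t + cnj (\<psi> t)) has_vector_derivative
      rhs \<sigma> True (\<phi> t + cnj (\<psi> t)) (cnj (\<phi> t + cnj (\<psi> t))) t) (at t)" by simp
  show "((\<lambda>t. cnj (\<phi> t + cnj (\<psi> t))) has_vector_derivative
      rhs \<sigma> False (\<phi> t + cnj (\<psi> t)) (cnj (\<phi> t + cnj (\<psi> t))) t) (at t)"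
  proof -
    have "cnj (rhs \<sigma> False (\<phi> t + cnj (\<psi> t)) (cnj (\<phi> t + cnj (\<psi> t))) t)
        = rhs \<sigma> True (\<phi> t + cnj (\<psi> t)) (cnj (\<phi> t + cnj (\<psi> t))) t"
      using cnj_rhs_real[OF \<open>\<sigma> \<in> \<real>\<close>] by simp
    then show ?thesis using has_vector_derivative_cnj[OF d] by (metis complex_cnj_cnj)
  qed
next
  show "periodic2pi (\<lambda>t. \<phi> t + cnj (\<psi> t))" "periodic2pi (\<lambda>t. cnj (\<phi> t + cnj (\<psi> t)))"
    using \<open>periodic2pi \<phi>\<close> \<open>periodic2pi \<psi>\<close> by (simp_all add: periodic2pi_def)
next
  have "basic_form \<sigma> \<phi> \<psi> r t = radial \<sigma> r * (\<phi> t + cnj (\<psi> t))"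
    using \<open>0 < r\<close> cnj_radial_real[OF \<open>\<sigma> \<in> \<real>\<close>] by (simp add: basic_form_eq_radial algebra_simps)
  with nontrivial show "\<exists>t. \<phi> t + cnj (\<psi> t) \<noteq> 0 \<or> cnj (\<phi> t + cnj (\<psi> t)) \<noteq> 0" by auto
qed

text \<open>For non-real \<sigma> the radii 1 and r, where r^\<sigma> is purely imaginary, separate
  \<phi> from cnj \<psi>; so \<phi>, \<psi> are themselves differentiable and solve the system.\<close>
lemma periodic_solution_nonreal_exponent:
  assumes sol: "solves a b nu c \<epsilon> (basic_form \<sigma> \<phi> \<psi>)" and lm: "lm = lam a b \<epsilon>" and "\<sigma> \<notin> \<real>"
    and "periodic2pi \<phi>" "periodic2pi \<psi>" and nontrivial: "basic_form \<sigma> \<phi> \<psi> r t \<noteq> 0" "0 < r"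
  shows "periodic_solution \<sigma> \<phi> \<psi>"
  unfolding periodic_solution_def
proof (intro conjI allI)
  obtain r' where "0 < r'" and imaginary: "cnj (radial \<sigma> r') = - radial \<sigma> r'"
    using radial_imaginary_exists \<open>\<sigma> \<notin> \<real>\<close> complex_is_Real_iff by blast
  define k where "k = radial \<sigma> r'"
  have "k \<noteq> 0" by (simp add: k_def radial_def)
  fix t
  let ?D1 = "rhs \<sigma> True (\<phi> t) (\<psi> t) t" and ?D2 = "rhs \<sigma> False (\<phi> t) (\<psi> t) t"
  have g1: "((\<lambda>s. \<phi> s + cnj (\<psi> s)) has_vector_derivative ?D1 + cnj ?D2) (at t)"
    using has_vector_derivative_basic_form[OF sol lm zero_less_one, of t] by (simp add: basic_form_eq_radial)
  have g2: "((\<lambda>s. k * \<phi> s - k * cnj (\<psi> s)) has_vector_derivative k * ?D1 - k * cnj ?D2) (at t)"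
    using has_vector_derivative_basic_form[OF sol lm \<open>0 < r'\<close>, of t] imaginary
    by (simp add: basic_form_eq_radial[OF \<open>0 < r'\<close>] k_def[symmetric])
  have "\<phi> = (\<lambda>s. inverse 2 * ((\<phi> s + cnj (\<psi> s)) + inverse k * (k * \<phi> s - k * cnj (\<psi> s))))"
    using \<open>k \<noteq> 0\<close> by (simp add: fun_eq_iff field_simps)
  moreover have "inverse 2 * ((?D1 + cnj ?D2) + inverse k * (k * ?D1 - k * cnj ?D2)) = ?D1"
    using \<open>k \<noteq> 0\<close> by (simp add: field_simps)
  ultimately show "(\<phi> has_vector_derivative ?D1) (at t)"
    using has_vector_derivative_mult_right[OF has_vector_derivative_add[OF g1
        has_vector_derivative_mult_right[OF g2, of "inverse k"]], of "inverse 2"] by metis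
  have "\<psi> = (\<lambda>s. cnj (inverse 2 * ((\<phi> s + cnj (\<psi> s)) - inverse k * (k * \<phi> s - k * cnj (\<psi> s)))))"
    using \<open>k \<noteq> 0\<close> by (simp add: fun_eq_iff field_simps)
  moreover have "cnj (inverse 2 * ((?D1 + cnj ?D2) - inverse k * (k * ?D1 - k * cnj ?D2))) = ?D2"
    using \<open>k \<noteq> 0\<close> by (simp add: field_simps)
  ultimately show "(\<psi> has_vector_derivative ?D2) (at t)"
    using has_vector_derivative_cnj[OF has_vector_derivative_mult_right[OF has_vector_derivative_diff[OF g1
        has_vector_derivative_mult_right[OF g2, of "inverse k"]], of "inverse 2"]] by metis
next
  show "periodic2pi \<phi>" "periodic2pi \<psi>" by fact+
  show "\<exists>t. \<phi> t \<noteq> 0 \<or> \<psi> t \<noteq> 0"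
    using nontrivial by (auto simp: basic_form_eq_radial intro!: exI[of _ t])
qed

lemma Spec_imp_periodic_solution:
  assumes "\<sigma> \<in> Spec a b nu c \<epsilon>" and lm: "lm = lam a b \<epsilon>"
  obtains Z1 Z2 where "periodic_solution \<sigma> Z1 Z2"
proof -
  obtain \<phi> \<psi> r t where "periodic2pi \<phi>" "periodic2pi \<psi>"
    and sol: "solves a b nu c \<epsilon> (basic_form \<sigma> \<phi> \<psi>)"
    and "0 < r" "basic_form \<sigma> \<phi> \<psi> r t \<noteq> 0"
    using assms(1) unfolding Spec_def by blast
  then show ?thesis
    using periodic_solution_real_exponent[OF sol lm] periodic_solution_nonreal_exponent[OF sol lm] that
    by (cases "\<sigma> \<in> \<real>") blast+
qed

lemma periodic_solution_imp_monodromy_det_eq_0: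
  assumes Z: "periodic_solution z Z1 Z2"
  shows "monodromy_det (2 * pi) z = 0"
proof (rule monodromy_det_eq_0)
  have p1: "periodic2pi Z1" and p2: "periodic2pi Z2"
    using Z unfolding periodic_solution_def by auto
  show sol: "solves_on z Z1 Z2 (2 * pi)"
    using Z unfolding periodic_solution_def solves_on_def by (simp add: has_vector_derivative_at_within)
  show "Z1 (2 * pi) = Z1 0" "Z2 (2 * pi) = Z2 0"
    using periodic2pi_add_int[OF p1, of 0 1] periodic2pi_add_int[OF p2, of 0 1] by simp_all
  show "Z1 0 \<noteq> 0 \<or> Z2 0 \<noteq> 0"
  proof (rule ccontr)
    assume "\<not> (Z1 0 \<noteq> 0 \<or> Z2 0 \<noteq> 0)"
    obtain t where t: "Z1 t \<noteq> 0 \<or> Z2 t \<noteq> 0" using Z unfolding periodic_solution_def by blast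
    define t' where "t' = 2 * pi * frac (t / (2 * pi))"
    have "t' \<in> {0..2 * pi}" by (simp add: t'_def frac_lt_1 less_imp_le)
    then have "Z1 t' = 0" "Z2 t' = 0"
      using solves_on_eq_fundamental_combination[OF sol, of t'] \<open>\<not> (Z1 0 \<noteq> 0 \<or> Z2 0 \<noteq> 0)\<close> by simp_all
    moreover have "t = t' + 2 * pi * of_int \<lfloor>t / (2 * pi)\<rfloor>"
      by (simp add: t'_def frac_def algebra_simps)
    then obtain m where "t = t' + 2 * pi * of_int m" by blast
    then have "Z1 t = Z1 t'" "Z2 t = Z2 t'"
      using periodic2pi_add_int[OF p1] periodic2pi_add_int[OF p2] by simp_all
    ultimately show False using t by simp
  qed
qed simp

end

theorem lemma2p1:
  fixes a b \<nu> :: real and k :: nat and c :: "real \<Rightarrow> complex"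
  assumes "a > 0" and "b \<noteq> 0" and "0 \<le> \<nu>" and "\<nu> < 1" and "k \<ge> 2"
    and "periodic2pi c" and "Ck k c"
  shows "\<forall>\<epsilon>::real. \<forall>z. \<not> z islimpt Spec a b \<nu> c \<epsilon>"
proof (intro allI)
  fix \<epsilon> :: real and z :: complex
  have "Re (lam a b \<epsilon>) > 0" using \<open>a > 0\<close> by (simp add: lam_def)
  moreover have "continuous_on UNIV c" using Ck_imp_continuous[of k c] \<open>k \<ge> 2\<close> \<open>Ck k c\<close> by simp
  ultimately interpret exponent_ode "lam a b \<epsilon>" \<nu> c by unfold_locales auto
  have "Spec a b \<nu> c \<epsilon> \<subseteq> {\<sigma>. monodromy_det (2 * pi) \<sigma> = 0}"
    using Spec_imp_periodic_solution periodic_solution_imp_monodromy_det_eq_0 by blast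
  moreover have "\<not> z islimpt {\<sigma>. monodromy_det (2 * pi) \<sigma> = 0}"
    using \<open>Re (lam a b \<epsilon>) > 0\<close>
    by (intro not_islimpt_zeros_of_entire[where w = dissipative_exponent] holomorphic_monodromy_det
        monodromy_det_dissipative_exponent_nonzero)
      simp_all
  ultimately show "\<not> z islimpt Spec a b \<nu> c \<epsilon>" using islimpt_subset by blast
qed

end
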